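(* Let $X$ be a real Banach space. Then: (1) if $A\subseteq B\subseteq X$ then $\mathbf E(A)\le\mathbf E(B)$ and $\mathbf E_0(A)\le\mathbf E_0(B)$; (2) for every $A\subseteq X$, $\mathbf E_0(A)\ge\mathbf E(A)\ge\sup_{x\in A}\|x\|$; (3) if $K_{\mathcal B,\mathcal E}$ is a compact brick in $X$ then $\mathbf E(K_{\mathcal B,\mathcal E})=\sup_{x\in K_{\mathcal B,\mathcal E}}\|x\|$; (4) if $K_{\mathcal B,\mathcal E}$ is a compact brick in $X$ with $\mathcal B$ a $1$-unconditional basis, then $\mathbf E_0(K_{\mathcal B,\mathcal E})=\sup_{x\in K_{\mathcal B,\mathcal E}}\|x\|$.
   Context: A brick in $X$ is a set $K_{\mathcal B,\mathcal E}=\{x\in X:\ |e_n^*(x)|\le\varepsilon_n\ \forall n\}$, where $\mathcal B=(e_n)$ is a normalized Schauder basis of $X$ with biorthogonal functionals $(e_n^* )$ and $\mathcal E=(\varepsilon_n)$ is a sequence of nonnegative numbers. Its unconditional radius is $r^{\rm unc}(K_{\mathcal B,\mathcal E})=\sup_{\theta_n=\pm1}\|\sum_n\theta_n\varepsilon_ne_n\|$ (norm of a divergent series $=\infty$). The entropy of $A\subseteq X$ is $\mathbf E(A)=\inf\{r^{\rm unc}(K_{\mathcal B,\mathcal E}): A\subseteq K_{\mathcal B,\mathcal E}\}$, and the unconditional entropy $\mathbf E_0(A)$ is the same infimum restricted to bricks with $\mathcal B$ a $1$-unconditional basis (i.e. $\|\sum_n\theta_ne_n^*(x)e_n\|\le\|x\|$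 for all $x$ and all signs $\theta_n=\pm1$); the infimum of an empty set (or of only infinite values) is $\infty$. *)

theory Defs
  imports "HOL-Analysis.Analysis"
begin

definition schauder_basis :: "(nat \<Rightarrow> 'a::banach) \<Rightarrow> bool" where
  "schauder_basis e \<longleftrightarrow> (\<forall>x. \<exists>!c. (\<lambda>n. c n *\<^sub>R e n) sums x)"

definition normalized_schauder_basis :: "(nat \<Rightarrow> 'a::banach) \<Rightarrow> bool" where
  "normalized_schauder_basis e \<longleftrightarrow> schauder_basis e \<and> (\<forall>n. norm (e n) = 1)"

definition coord :: "(nat \<Rightarrow> 'a::banach) \<Rightarrow> nat \<Rightarrow> 'a \<Rightarrow> real" where
  "coord e n x = (THE c. (\<lambda>k. c k *\<^sub>R e k) sums x) n"

definition one_unconditional :: "(nat \<Rightarrow> 'a::banach) \<Rightarrow> bool" where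
  "one_unconditional e \<longleftrightarrow>
     (\<forall>x \<theta>. (\<forall>n. \<theta> n = 1 \<or> \<theta> n = -1) \<longrightarrow>
        summable (\<lambda>n. (\<theta> n * coord e n x) *\<^sub>R e n) \<and>
        norm (\<Sum>n. (\<theta> n * coord e n x) *\<^sub>R e n) \<le> norm x)"

definition brick :: "(nat \<Rightarrow> 'a::banach) \<Rightarrow> (nat \<Rightarrow> real) \<Rightarrow> 'a set" where
  "brick e \<epsilon> = {x. \<forall>n. \<bar>coord e n x\<bar> \<le> \<epsilon> n}"

definition r_unc :: "(nat \<Rightarrow> 'a::banach) \<Rightarrow> (nat \<Rightarrow> real) \<Rightarrow> ennreal" where
  "r_unc e \<epsilon> = (SUP \<theta> \<in> {\<theta>. \<forall>n. \<theta> n = 1 \<or> \<theta> n = -1}.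
      if summable (\<lambda>n. (\<theta> n * \<epsilon> n) *\<^sub>R e n)
      then ennreal (norm (\<Sum>n. (\<theta> n * \<epsilon> n) *\<^sub>R e n)) else \<infinity>)"

definition entropy :: "'a::banach set \<Rightarrow> ennreal" where
  "entropy A = (INF p \<in> {(e, \<epsilon>). normalized_schauder_basis e \<and> (\<forall>n. \<epsilon> n \<ge> 0)
                    \<and> A \<subseteq> brick e \<epsilon>}. r_unc (fst p) (snd p))"

definition unc_entropy :: "'a::banach set \<Rightarrow> ennreal" where
  "unc_entropy A = (INF p \<in> {(e, \<epsilon>). normalized_schauder_basis e \<and> one_unconditional e
                    \<and> (\<forall>n. \<epsilon> n \<ge> 0) \<and> A \<subseteq> brick e \<epsilon>}. r_unc (fst p) (snd p))"

end

theory Submission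
  imports Defs
begin

text \<open>The norm of any x in a brick is the limit of the norms of its partial expansions
  \<open>\<Sum>n<N. c\<^sub>n e\<^sub>n\<close>, and \<open>|c\<^sub>n| \<le> \<epsilon>\<^sub>n\<close> makes each of them a convex combination of sign sums
  \<open>\<Sum>n<N. \<theta>\<^sub>n \<epsilon>\<^sub>n e\<^sub>n\<close>, whose norms are bounded by the unconditional radius; so every brick
  containing A has radius at least \<open>sup\<^sub>A \<parallel>x\<parallel>\<close>. Conversely, if the brick K is compact, the
  series \<open>\<Sum> \<theta>\<^sub>n \<epsilon>\<^sub>n e\<^sub>n\<close> converges (otherwise disjoint blocks of it, all lying in K, would
  have norms bounded below, and sums of many of them, which again lie in K, would be
  unbounded), and its sum lies in K itself; hence K realises the bound.\<close>

lemma schauder_basis_coord_sums: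
  assumes "schauder_basis e"
  shows "(\<lambda>n. coord e n x *\<^sub>R e n) sums x"
proof -
  from assms have "\<exists>!c. (\<lambda>n. c n *\<^sub>R e n) sums x" by (simp add: schauder_basis_def)
  then have "(\<lambda>n. (THE c. (\<lambda>k. c k *\<^sub>R e k) sums x) n *\<^sub>R e n) sums x"
    by (rule theI')
  then show ?thesis by (simp add: coord_def)
qed

lemma schauder_basis_coord_unique:
  assumes "schauder_basis e" "(\<lambda>n. c n *\<^sub>R e n) sums x"
  shows "coord e n x = c n"
proof -
  from assms(1) have "\<exists>!c. (\<lambda>n. c n *\<^sub>R e n) sums x" by (simp add: schauder_basis_def)
  then have "(THE c. (\<lambda>k. c k *\<^sub>R e k) sums x) = c"
    using assms(2) the1_equality[of "\<lambda>c. (\<lambda>n. c n *\<^sub>R e n) sums x"] by blast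
  then show ?thesis by (simp add: coord_def)
qed

lemma coord_sum_finite:
  assumes "schauder_basis e" "finite S"
  shows "coord e n (\<Sum>k\<in>S. c k *\<^sub>R e k) = (if n \<in> S then c n else 0)"
proof -
  have "(\<lambda>n. (if n \<in> S then c n else 0) *\<^sub>R e n) sums (\<Sum>k\<in>S. (if k \<in> S then c k else 0) *\<^sub>R e k)"
    by (rule sums_finite[OF assms(2)]) auto
  also have "(\<Sum>k\<in>S. (if k \<in> S then c k else 0) *\<^sub>R e k) = (\<Sum>k\<in>S. c k *\<^sub>R e k)"
    by (rule sum.cong) auto
  finally show ?thesis by (rule schauder_basis_coord_unique[OF assms(1)])
qed

lemma sum_in_brick:
  assumes "schauder_basis e" "finite S" "\<And>n. n \<in> S \<Longrightarrow> \<bar>c n\<bar> \<le> \<epsilon> n" "\<And>n. \<epsilon> n \<ge> 0"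
  shows "(\<Sum>k\<in>S. c k *\<^sub>R e k) \<in> brick e \<epsilon>"
  using assms by (auto simp: brick_def coord_sum_finite)

lemma signed_series_le_r_unc:
  assumes "\<forall>n. \<theta> n = 1 \<or> \<theta> n = -1"
  shows "(if summable (\<lambda>n. (\<theta> n * \<epsilon> n) *\<^sub>R e n)
           then ennreal (norm (\<Sum>n. (\<theta> n * \<epsilon> n) *\<^sub>R e n)) else \<infinity>) \<le> r_unc e \<epsilon>"
  unfolding r_unc_def by (rule SUP_upper) (use assms in simp)

lemma signed_series_bounded_if_r_unc_finite:
  assumes "r_unc e \<epsilon> \<noteq> \<infinity>" "\<forall>n. \<theta> n = 1 \<or> \<theta> n = -1"
  shows "summable (\<lambda>n. (\<theta> n * \<epsilon> n) *\<^sub>R e n)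
    \<and> norm (\<Sum>n. (\<theta> n * \<epsilon> n) *\<^sub>R e n) \<le> enn2real (r_unc e \<epsilon>)"
proof -
  note le = signed_series_le_r_unc[OF assms(2), of \<epsilon> e]
  then have summable: "summable (\<lambda>n. (\<theta> n * \<epsilon> n) *\<^sub>R e n)"
    using assms(1) by (auto simp: top_unique split: if_splits)
  moreover have "norm (\<Sum>n. (\<theta> n * \<epsilon> n) *\<^sub>R e n) \<le> enn2real (r_unc e \<epsilon>)"
    using enn2real_mono[of "ennreal (norm (\<Sum>n. (\<theta> n * \<epsilon> n) *\<^sub>R e n))" "r_unc e \<epsilon>"]
      le summable assms(1) by (simp add: top.not_eq_extremum)
  ultimately show ?thesis ..
qed

text \<open>Extending the signs beyond N once by +1 and once by -1 gives two sign series whose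
  average is the partial sum.\<close>
lemma signed_partial_sum_bounded:
  fixes e :: "nat \<Rightarrow> 'a::real_normed_vector"
  assumes bound: "\<And>\<theta>. \<forall>n. \<theta> n = 1 \<or> \<theta> n = -1 \<Longrightarrow>
      summable (\<lambda>n. (\<theta> n * \<epsilon> n) *\<^sub>R e n) \<and> norm (\<Sum>n. (\<theta> n * \<epsilon> n) *\<^sub>R e n) \<le> R"
    and signs: "\<forall>n<N. \<theta> n = 1 \<or> \<theta> n = -1"
  shows "norm (\<Sum>n<N. (\<theta> n * \<epsilon> n) *\<^sub>R e n) \<le> R"
proof -
  define f where "f s n = ((if n < N then \<theta> n else s) * \<epsilon> n) *\<^sub>R e n" for s :: real and n
  have sign_ext: "\<forall>n. (if n < N then \<theta> n else s) = 1 \<or> (if n < N then \<theta> n else s) = -1"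
    if "s = 1 \<or> s = -1" for s
    using signs that by auto
  have plus: "summable (f 1)" "norm (suminf (f 1)) \<le> R"
    and minus: "summable (f (-1))" "norm (suminf (f (-1))) \<le> R"
    using bound[OF sign_ext] unfolding f_def by auto
  have "(\<lambda>n. f 1 n + f (-1) n) sums (\<Sum>n<N. f 1 n + f (-1) n)"
    by (rule sums_finite) (auto simp: f_def)
  moreover have "(\<lambda>n. f 1 n + f (-1) n) sums (suminf (f 1) + suminf (f (-1)))"
    using plus minus by (intro sums_add summable_sums)
  moreover have "(\<Sum>n<N. f 1 n + f (-1) n) = 2 *\<^sub>R (\<Sum>n<N. (\<theta> n * \<epsilon> n) *\<^sub>R e n)"
    by (simp add: f_def scaleR_2 sum.distrib[symmetric])
  ultimately have "2 *\<^sub>R (\<Sum>n<N. (\<theta> n * \<epsilon> n) *\<^sub>R e n) = suminf (f 1) + suminf (f (-1))"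
    using sums_unique2 by metis
  then have "2 * norm (\<Sum>n<N. (\<theta> n * \<epsilon> n) *\<^sub>R e n) \<le> norm (suminf (f 1)) + norm (suminf (f (-1)))"
    by (metis norm_scaleR abs_numeral norm_triangle_ineq)
  with plus minus show ?thesis by linarith
qed

text \<open>Induction on k: the coefficient at index k is a convex combination of +1 and -1, and the
  partial sum depends affinely on it.\<close>
lemma partial_sum_bounded_if_signs_from:
  fixes e :: "nat \<Rightarrow> 'a::real_normed_vector"
  assumes bound: "\<And>\<theta>. \<forall>n. \<theta> n = 1 \<or> \<theta> n = -1 \<Longrightarrow>
      summable (\<lambda>n. (\<theta> n * \<epsilon> n) *\<^sub>R e n) \<and> norm (\<Sum>n. (\<theta> n * \<epsilon> n) *\<^sub>R e n) \<le> R"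
    and "\<forall>n<N. \<bar>t n\<bar> \<le> 1" and "\<forall>n. k \<le> n \<and> n < N \<longrightarrow> t n = 1 \<or> t n = -1"
  shows "norm (\<Sum>n<N. (t n * \<epsilon> n) *\<^sub>R e n) \<le> R"
  using assms(2,3)
proof (induction k arbitrary: t)
  case 0
  then show ?case by (intro signed_partial_sum_bounded[OF bound]) auto
next
  case (Suc k)
  show ?case
  proof (cases "k < N")
    case False
    with Suc.prems show ?thesis by (intro Suc.IH) auto
  next
    case True
    define S where "S t' = (\<Sum>n<N. (t' n * \<epsilon> n) *\<^sub>R e n)" for t'
    define l where "l = (1 + t k) / 2"
    have l: "0 \<le> l" "l \<le> 1" using Suc.prems True by (auto simp: l_def abs_le_iff)
    have "norm (S (t(k := s))) \<le> R" if s: "s = 1 \<or> s = -1" for s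
      unfolding S_def
    proof (rule Suc.IH)
      show "\<forall>n<N. \<bar>(t(k := s)) n\<bar> \<le> 1" using Suc.prems(1) s by auto
      show "\<forall>n. k \<le> n \<and> n < N \<longrightarrow> (t(k := s)) n = 1 \<or> (t(k := s)) n = -1"
        using Suc.prems(2) s by (metis Suc_leI fun_upd_apply le_neq_implies_less)
    qed
    then have plus: "norm (S (t(k := 1))) \<le> R" and minus: "norm (S (t(k := -1))) \<le> R"
      by simp_all
    have "t n * \<epsilon> n = l * ((t(k := 1)) n * \<epsilon> n) + (1 - l) * ((t(k := -1)) n * \<epsilon> n)" for n
      by (cases "n = k") (auto simp: l_def field_simps)
    then have "S t = l *\<^sub>R S (t(k := 1)) + (1 - l) *\<^sub>R S (t(k := -1))"
      unfolding S_def scaleR_sum_right sum.distrib[symmetric]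
      by (intro sum.cong) (simp_all add: scaleR_left_distrib)
    then have "norm (S t) \<le> l * norm (S (t(k := 1))) + (1 - l) * norm (S (t(k := -1)))"
      using l by (metis norm_triangle_ineq norm_scaleR abs_of_nonneg diff_ge_0_iff_ge)
    also have "\<dots> \<le> l * R + (1 - l) * R"
      using l plus minus by (intro add_mono mult_left_mono) auto
    finally show ?thesis by (simp add: S_def algebra_simps)
  qed
qed

lemma norm_le_r_unc_if_in_brick:
  assumes "schauder_basis e" "x \<in> brick e \<epsilon>"
  shows "ennreal (norm x) \<le> r_unc e \<epsilon>"
proof (cases "r_unc e \<epsilon> = \<infinity>")
  case False
  define R where "R = enn2real (r_unc e \<epsilon>)"
  define c where "c n = coord e n x" for n
  have c_le: "\<bar>c n\<bar> \<le> \<epsilon> n" for n using assms(2) by (simp add: brick_def c_def)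
  define t where "t n = (if \<epsilon> n = 0 then 0 else c n / \<epsilon> n)" for n
  have t_le: "\<bar>t n\<bar> \<le> 1" for n
    using c_le[of n] by (auto simp: t_def abs_divide divide_le_eq_1)
  have t_eps: "t n * \<epsilon> n = c n" for n
    using c_le[of n] by (auto simp: t_def)
  have partial: "norm (\<Sum>n<N. c n *\<^sub>R e n) \<le> R" for N
    using partial_sum_bounded_if_signs_from[of \<epsilon> e R N t N]
      signed_series_bounded_if_r_unc_finite[OF False] t_le
    by (simp add: R_def t_eps)
  have "(\<lambda>N. \<Sum>n<N. c n *\<^sub>R e n) \<longlonglongrightarrow> x"
    using schauder_basis_coord_sums[OF assms(1)] by (simp add: c_def sums_def)
  then have "norm x \<le> R"
    by (rule LIMSEQ_le_const2[OF tendsto_norm]) (use partial in auto)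
  then have "ennreal (norm x) \<le> ennreal R" by (rule ennreal_leI)
  then show ?thesis using False by (simp add: R_def ennreal_enn2real_if)
qed simp

lemma Sup_norm_le_entropy:
  fixes A :: "'a::banach set"
  shows "(SUP x \<in> A. ennreal (norm x)) \<le> entropy A"
  unfolding entropy_def
  by (intro INF_greatest SUP_least)
    (auto intro!: norm_le_r_unc_if_in_brick simp: normalized_schauder_basis_def subset_iff)

text \<open>Blocks \<open>[m\<^sub>k, m\<^sub>k')\<close> of indices violating the Cauchy criterion, chosen one after another.\<close>
lemma not_summable_disjoint_blocks:
  fixes f :: "nat \<Rightarrow> 'a::banach"
  assumes "\<not> summable f"
  obtains \<delta> and B :: "nat \<Rightarrow> nat set" where "\<delta> > 0" "\<And>k. finite (B k)" "disjoint_family B"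
    "\<And>k. \<delta> \<le> norm (sum f (B k))"
proof -
  obtain \<delta> where \<delta>: "\<delta> > 0" "\<forall>N. \<exists>m\<ge>N. \<exists>n. \<delta> \<le> norm (sum f {m..<n})"
    using assms unfolding summable_Cauchy by (auto simp: not_less)
  then obtain m n where mn: "\<And>N. m N \<ge> N" "\<And>N. \<delta> \<le> norm (sum f {m N..<n N})" by metis
  have m_less_n: "m N < n N" for N
    using mn(2)[of N] \<delta>(1) by (cases "m N < n N") auto
  define P where "P = rec_nat 0 (\<lambda>_ p. n p)"
  have P_Suc: "P (Suc k) = n (P k)" for k by (simp add: P_def)
  have P_bounds: "P k \<le> m (P k)" "m (P k) < P (Suc k)" for k
    using mn(1)[of "P k"] m_less_n[of "P k"] by (auto simp: P_Suc)
  have "strict_mono P"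
    by (rule strict_monoI_Suc) (metis P_bounds le_less_trans)
  define B where "B k = {m (P k)..<P (Suc k)}" for k
  have "B k \<inter> B k' = {}" if "k < k'" for k k'
  proof -
    have "P (Suc k) \<le> P k'" using \<open>strict_mono P\<close> that by (simp add: strict_mono_less_eq)
    then show ?thesis using P_bounds(1)[of k'] by (auto simp: B_def)
  qed
  then have disjoint: "disjoint_family B"
    unfolding disjoint_family_on_def by (metis Int_commute nat_neq_iff)
  show ?thesis
  proof (rule that)
    show "\<delta> > 0" by (fact \<delta>(1))
    show "finite (B k)" for k by (simp add: B_def)
    show "disjoint_family B" by (fact disjoint)
    show "\<delta> \<le> norm (sum f (B k))" for k
      using mn(2)[of "P k"] by (simp add: B_def P_Suc)
  qed
qed

text \<open>A convergent subsequence with limit z, \<open>\<parallel>z\<parallel> \<ge> \<delta>\<close>, contributes at least \<open>\<delta>/2\<close> per term.\<close>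
lemma compact_sums_unbounded_if_norm_bounded_below:
  fixes b :: "nat \<Rightarrow> 'a::real_normed_vector"
  assumes "compact S" "\<And>k. b k \<in> S" "\<delta> > 0" "\<And>k. \<delta> \<le> norm (b k)"
  obtains J where "finite J" "R < norm (sum b J)"
proof -
  obtain z r where r: "strict_mono r" and lim: "(b \<circ> r) \<longlonglongrightarrow> z"
    using compact_imp_seq_compact[OF assms(1)] assms(2) unfolding seq_compact_def by metis
  have z: "\<delta> \<le> norm z"
    by (rule LIMSEQ_le_const[OF tendsto_norm[OF lim]]) (auto simp: assms(4))
  obtain K where K: "\<And>k. k \<ge> K \<Longrightarrow> norm (b (r k) - z) < \<delta>/2"
    using lim assms(3) unfolding LIMSEQ_iff by (metis half_gt_zero comp_apply)
  obtain M :: nat where M: "R < real M * (\<delta>/2)"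
    using ex_less_of_nat_mult[of "\<delta>/2" R] assms(3) by auto
  define I where "I = {K..<K+M}"
  have sum_r: "sum b (r ` I) = (\<Sum>i\<in>I. z) + (\<Sum>i\<in>I. b (r i) - z)"
    using strict_mono_imp_inj_on[OF r] by (simp add: sum.reindex inj_on_subset sum.distrib[symmetric])
  have "norm (\<Sum>i\<in>I. b (r i) - z) \<le> (\<Sum>i\<in>I. \<delta>/2)"
    using K by (intro order_trans[OF norm_sum] sum_mono) (auto simp: I_def less_imp_le)
  moreover have "norm (\<Sum>i\<in>I. z) = real M * norm z"
    by (simp add: I_def sum_constant_scaleR)
  ultimately have "real M * norm z - real M * (\<delta>/2) \<le> norm (sum b (r ` I))"
    unfolding sum_r using norm_diff_ineq[of "\<Sum>i\<in>I. z" "\<Sum>i\<in>I. b (r i) - z"]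
    by (simp add: I_def)
  moreover have "real M * \<delta> \<le> real M * norm z" using z by (simp add: mult_left_mono)
  ultimately have "R < norm (sum b (r ` I))" using M by linarith
  moreover have "finite (r ` I)" by (simp add: I_def)
  ultimately show ?thesis by (rule that[rotated])
qed

lemma compact_brick_summable:
  fixes e :: "nat \<Rightarrow> 'a::banach"
  assumes sb: "schauder_basis e" and eps: "\<forall>n. \<epsilon> n \<ge> 0" and K: "compact (brick e \<epsilon>)"
    and t: "\<forall>n. \<bar>t n\<bar> \<le> 1"
  shows "summable (\<lambda>n. (t n * \<epsilon> n) *\<^sub>R e n)" (is "summable ?f")
proof (rule ccontr)
  have finite_sum: "sum ?f S \<in> brick e \<epsilon>" if "finite S" for S
    using sb that eps t by (intro sum_in_brick) (auto simp: abs_mult mult_left_le_one_le)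
  obtain R where R: "\<And>x. x \<in> brick e \<epsilon> \<Longrightarrow> norm x \<le> R"
    using compact_imp_bounded[OF K] unfolding bounded_iff by blast
  assume "\<not> summable ?f"
  then show False
  proof (rule not_summable_disjoint_blocks)
    fix \<delta> :: real and B :: "nat \<Rightarrow> nat set"
    assume \<delta>: "\<delta> > 0" and B: "\<And>k. finite (B k)" "disjoint_family B"
      "\<And>k. \<delta> \<le> norm (sum ?f (B k))"
    have "sum ?f (B k) \<in> brick e \<epsilon>" for k using finite_sum B(1) by blast
    then obtain J where J: "finite J" "R < norm (\<Sum>j\<in>J. sum ?f (B j))"
      by (rule compact_sums_unbounded_if_norm_bounded_below[OF K _ \<delta> B(3)])
    have "(\<Sum>j\<in>J. sum ?f (B j)) = sum ?f (\<Union>j\<in>J. B j)"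
      using J(1) B(1,2) by (intro sum.UNION_disjoint[symmetric]) (auto simp: disjoint_family_on_def)
    then have "(\<Sum>j\<in>J. sum ?f (B j)) \<in> brick e \<epsilon>"
      using J(1) B(1) by (auto intro: finite_sum)
    with R J(2) show False by fastforce
  qed
qed

lemma r_unc_le_Sup_norm_if_compact_brick:
  fixes e :: "nat \<Rightarrow> 'a::banach"
  assumes sb: "schauder_basis e" and eps: "\<forall>n. \<epsilon> n \<ge> 0" and K: "compact (brick e \<epsilon>)"
  shows "r_unc e \<epsilon> \<le> (SUP x\<in>brick e \<epsilon>. ennreal (norm x))"
  unfolding r_unc_def
proof (rule SUP_least)
  fix \<theta> :: "nat \<Rightarrow> real" assume "\<theta> \<in> {\<theta>. \<forall>n. \<theta> n = 1 \<or> \<theta> n = -1}"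
  then have abs_\<theta>: "\<bar>\<theta> n\<bar> = 1" for n by (metis (mono_tags) abs_1 abs_minus_cancel mem_Collect_eq)
  then have summable: "summable (\<lambda>n. (\<theta> n * \<epsilon> n) *\<^sub>R e n)"
    by (intro compact_brick_summable[OF sb eps K]) simp
  have "coord e n (\<Sum>n. (\<theta> n * \<epsilon> n) *\<^sub>R e n) = \<theta> n * \<epsilon> n" for n
    by (rule schauder_basis_coord_unique[OF sb summable_sums[OF summable]])
  then have "(\<Sum>n. (\<theta> n * \<epsilon> n) *\<^sub>R e n) \<in> brick e \<epsilon>"
    using abs_\<theta> eps by (simp add: brick_def abs_mult)
  then show "(if summable (\<lambda>n. (\<theta> n * \<epsilon> n) *\<^sub>R e n)
      then ennreal (norm (\<Sum>n. (\<theta> n * \<epsilon> n) *\<^sub>R e n)) else \<infinity>) \<le> (SUP x\<in>brick e \<epsilon>. ennreal (norm x))"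
    using summable by (auto intro!: SUP_upper)
qed

lemma entropy_mono: "A \<subseteq> B \<Longrightarrow> entropy A \<le> entropy B"
  unfolding entropy_def by (intro INF_superset_mono) auto

lemma unc_entropy_mono: "A \<subseteq> B \<Longrightarrow> unc_entropy A \<le> unc_entropy B"
  unfolding unc_entropy_def by (intro INF_superset_mono) auto

lemma entropy_le_unc_entropy: "entropy A \<le> unc_entropy A"
  unfolding entropy_def unc_entropy_def by (intro INF_superset_mono) auto

lemma entropy_brick_le_r_unc:
  "normalized_schauder_basis e \<Longrightarrow> \<forall>n. \<epsilon> n \<ge> 0 \<Longrightarrow> entropy (brick e \<epsilon>) \<le> r_unc e \<epsilon>"
  unfolding entropy_def by (rule INF_lower2[of "(e, \<epsilon>)"]) auto

lemma unc_entropy_brick_le_r_unc: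
  "normalized_schauder_basis e \<Longrightarrow> one_unconditional e \<Longrightarrow> \<forall>n. \<epsilon> n \<ge> 0 \<Longrightarrow>
    unc_entropy (brick e \<epsilon>) \<le> r_unc e \<epsilon>"
  unfolding unc_entropy_def by (rule INF_lower2[of "(e, \<epsilon>)"]) auto

theorem proposition4p2:
  fixes X_type :: "'a::banach itself"
  shows "(\<forall>A B :: 'a set. A \<subseteq> B \<longrightarrow> entropy A \<le> entropy B \<and> unc_entropy A \<le> unc_entropy B)
    \<and> (\<forall>A :: 'a set. unc_entropy A \<ge> entropy A \<and> entropy A \<ge> (SUP x \<in> A. ennreal (norm x)))
    \<and> (\<forall>(e :: nat \<Rightarrow> 'a) \<epsilon>. normalized_schauder_basis e \<and> (\<forall>n. \<epsilon> n \<ge> 0)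
         \<and> compact (brick e \<epsilon>)
         \<longrightarrow> entropy (brick e \<epsilon>) = (SUP x \<in> brick e \<epsilon>. ennreal (norm x)))
    \<and> (\<forall>(e :: nat \<Rightarrow> 'a) \<epsilon>. normalized_schauder_basis e \<and> one_unconditional e
         \<and> (\<forall>n. \<epsilon> n \<ge> 0) \<and> compact (brick e \<epsilon>)
         \<longrightarrow> unc_entropy (brick e \<epsilon>) = (SUP x \<in> brick e \<epsilon>. ennreal (norm x)))"
proof (intro conjI allI impI)
  fix e :: "nat \<Rightarrow> 'a" and \<epsilon> :: "nat \<Rightarrow> real"
  assume "normalized_schauder_basis e \<and> (\<forall>n. \<epsilon> n \<ge> 0) \<and> compact (brick e \<epsilon>)"
  then have "entropy (brick e \<epsilon>) \<le> (SUP x\<in>brick e \<epsilon>. ennreal (norm x))"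
    using entropy_brick_le_r_unc r_unc_le_Sup_norm_if_compact_brick order_trans
    unfolding normalized_schauder_basis_def by blast
  then show "entropy (brick e \<epsilon>) = (SUP x\<in>brick e \<epsilon>. ennreal (norm x))"
    using Sup_norm_le_entropy by (rule antisym)
next
  fix e :: "nat \<Rightarrow> 'a" and \<epsilon> :: "nat \<Rightarrow> real"
  assume "normalized_schauder_basis e \<and> one_unconditional e \<and> (\<forall>n. \<epsilon> n \<ge> 0) \<and> compact (brick e \<epsilon>)"
  then have "unc_entropy (brick e \<epsilon>) \<le> (SUP x\<in>brick e \<epsilon>. ennreal (norm x))"
    using unc_entropy_brick_le_r_unc r_unc_le_Sup_norm_if_compact_brick order_trans
    unfolding normalized_schauder_basis_def by blast
  then show "unc_entropy (brick e \<epsilon>) = (SUP x\<in>brick e \<epsilon>. ennreal (norm x))"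
    using order_trans[OF Sup_norm_le_entropy entropy_le_unc_entropy] by (rule antisym)
qed (simp_all add: entropy_mono unc_entropy_mono entropy_le_unc_entropy Sup_norm_le_entropy)

end
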